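(* Assume $A$ is passive, i.e. $\operatorname{Re}(x^*Ax)<0$ for all nonzero $x\in\mathbb C^n$, that $F\succeq0$, and that $V_k$ has full column rank. Let $X_k=V_kT_k^{-1}V_k^*$ and $R_k=C^*C+A^*X_k+X_kA-X_kFX_k$. Define $$K_k:=(V_k^*V_k)^{-1}V_k^*A^*V_k,\qquad g_k:=(V_k^*V_k)^{-1}V_k^*C^*.$$ Then: (i) $V_k^*R_kV_k=0$ if and only if $g_k=T_k^{-1}\mathbf 1$. (ii) $V_k^*R_kV_k=0$ if and only if $\Lambda_k^*T_k+T_kK_k-V_k^*FV_k=0$. (iii) If $V_k^*R_kV_k=0$, then, after a suitable ordering, $\alpha_j=-\bar\lambda_j$ for $j=1,\dots,k$, where $\lambda_1,\dots,\lambda_k$ are the eigenvalues (with multiplicity) of $$(V_k^*V_k)^{-1}V_k^*\big(A^*-V_kT_k^{-1}V_k^*F\big)V_k .$$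
   Context: Let $A\in\mathbb C^{n\times n}$, let $C\in\mathbb C^{1\times n}$, and let $F\in\mathbb C^{n\times n}$ be Hermitian; $M^*$ denotes the conjugate transpose and $\succeq0$ denotes Hermitian positive semidefinite. Let $\alpha_1,\dots,\alpha_k\in\mathbb C$ be pairwise distinct with $\operatorname{Re}(\alpha_j)>0$ and $-A^*+\alpha_jI$ nonsingular. Set $$V_k=\big[(-A^*+\alpha_1I)^{-1}C^*,\dots,(-A^*+\alpha_kI)^{-1}C^*\big]\in\mathbb C^{n\times k},$$ $\Lambda_k=\operatorname{diag}(\alpha_1,\dots,\alpha_k)$, $\mathbf 1=[1,\dots,1]^T\in\mathbb R^k$, and let $T_k\in\mathbb C^{k\times k}$ be the matrix with entries $T_k(i,j)=\dfrac{1+(V_k^*FV_k)_{ij}}{\bar\alpha_i+\alpha_j}$, i.e. the unique solution of $\Lambda_k^*T+T\Lambda_k=V_k^*FV_k+\mathbf 1\mathbf 1^*$. Under these assumptions $T_k$ is Hermitian positive definite. *)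

theory Defs
  imports "Jordan_Normal_Form.Schur_Decomposition" "Jordan_Normal_Form.DL_Rank"
begin

text \<open>A total matrix inverse: the two-sided inverse of a square matrix when it
exists (unique), otherwise an arbitrary square matrix of the same size.\<close>
definition minv :: "complex mat \<Rightarrow> complex mat" where
  "minv M = (SOME B. B \<in> carrier_mat (dim_row M) (dim_row M) \<and> inverts_mat M B \<and> inverts_mat B M)"

abbreviation ctr :: "complex mat \<Rightarrow> complex mat" where
  "ctr M \<equiv> mat_adjoint M"

definition Vk :: "nat \<Rightarrow> nat \<Rightarrow> complex mat \<Rightarrow> complex mat \<Rightarrow> (nat \<Rightarrow> complex) \<Rightarrow> complex mat" where
  "Vk n k A C \<alpha> = mat n k (\<lambda>(i,j).
      (minv (- ctr A + \<alpha> j \<cdot>\<^sub>m 1\<^sub>m n) * ctr C) $$ (i, 0))"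

definition Lam :: "nat \<Rightarrow> (nat \<Rightarrow> complex) \<Rightarrow> complex mat" where
  "Lam k \<alpha> = mat k k (\<lambda>(i,j). if i = j then \<alpha> i else 0)"

definition Tk :: "nat \<Rightarrow> nat \<Rightarrow> complex mat \<Rightarrow> complex mat \<Rightarrow> complex mat \<Rightarrow> (nat \<Rightarrow> complex) \<Rightarrow> complex mat" where
  "Tk n k A C F \<alpha> = (let V = Vk n k A C \<alpha> in
      mat k k (\<lambda>(i,j). (1 + (ctr V * F * V) $$ (i,j)) / (cnj (\<alpha> i) + \<alpha> j)))"

definition ones :: "nat \<Rightarrow> complex mat" where
  "ones k = mat k 1 (\<lambda>_. 1)"

end

theory Submission
  imports Defs
begin

text \<open>The columns of \<open>V\<close> are resolvent vectors, which gives the shift identity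
  \<open>A\<^sup>* V = V \<Lambda> - C\<^sup>* \<one>\<^sup>*\<close>, and the entrywise definition of \<open>T\<close> is the Lyapunov equation
  \<open>\<Lambda>\<^sup>* T + T \<Lambda> = V\<^sup>* F V + \<one> \<one>\<^sup>*\<close>. These two identities alone turn everything into matrix
  algebra: with \<open>u = V\<^sup>* C\<^sup>* - V\<^sup>* V T\<^sup>-\<^sup>1 \<one>\<close> one gets \<open>V\<^sup>* R V = u u\<^sup>*\<close>, and
  \<open>\<Lambda>\<^sup>* T + T K - V\<^sup>* F V = (\<one> - T g) \<one>\<^sup>*\<close>; both vanish exactly when \<open>g = T\<^sup>-\<^sup>1 \<one>\<close>. The
  projected closed-loop matrix equals \<open>T\<^sup>-\<^sup>1 (\<Lambda>\<^sup>* T + T K - V\<^sup>* F V) - T\<^sup>-\<^sup>1 \<Lambda>\<^sup>* T\<close>, so once the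
  residual vanishes it is similar to \<open>-\<Lambda>\<^sup>*\<close>.

  \<open>T\<close> is invertible because a kernel vector \<open>x\<close> gives \<open>x\<^sup>* V\<^sup>* F V x + |\<one>\<^sup>* x|\<^sup>2 = 0\<close> through
  the Lyapunov equation, hence \<open>\<one>\<^sup>* x = 0\<close> and \<open>T \<Lambda> x = 0\<close>: the kernel is \<open>\<Lambda>\<close>-invariant and
  orthogonal to \<open>\<one>\<close>, which for distinct \<open>\<alpha>\<^sub>j\<close> leaves only \<open>0\<close>.\<close>

lemma mat_adjoint_carrier[simp]: "M \<in> carrier_mat m n \<Longrightarrow> ctr M \<in> carrier_mat n m"
  unfolding mat_adjoint_def by auto

lemma mat_adjoint_dims[simp]: "dim_row (ctr M) = dim_col M" "dim_col (ctr M) = dim_row M"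
  unfolding mat_adjoint_def by auto

lemma mat_adjoint_index[simp]:
  "i < dim_col M \<Longrightarrow> j < dim_row M \<Longrightarrow> ctr M $$ (i, j) = cnj (M $$ (j, i))"
  unfolding mat_adjoint_def by (simp add: mat_of_rows_index)

lemma mat_adjoint_adjoint[simp]: "ctr (ctr M) = M"
  by (rule eq_matI) auto

lemma mat_adjoint_one[simp]: "ctr (1\<^sub>m n) = 1\<^sub>m n"
  by (rule eq_matI) auto

lemma mat_adjoint_mult: "dim_col M = dim_row N \<Longrightarrow> ctr (M * N) = ctr N * ctr M"
  by (rule eq_matI) (auto simp: scalar_prod_def intro!: sum.cong)

lemma mat_adjoint_minus:
  "dim_row M = dim_row N \<Longrightarrow> dim_col M = dim_col N \<Longrightarrow> ctr (M - N) = ctr M - ctr N"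
  by (rule eq_matI) auto

lemma cscalar_prod_mult_mat_vec:
  assumes M: "M \<in> carrier_mat m n" and x: "x \<in> carrier_vec n" and y: "y \<in> carrier_vec m"
  shows "(M *\<^sub>v x) \<bullet>c y = x \<bullet>c (ctr M *\<^sub>v y)"
proof -
  have "(M *\<^sub>v x) \<bullet>c y = (\<Sum>i<m. (\<Sum>j<n. M $$ (i, j) * x $ j) * cnj (y $ i))"
    using M x y by (auto simp: scalar_prod_def mult_mat_vec_def lessThan_atLeast0 intro!: sum.cong)
  also have "\<dots> = (\<Sum>j<n. x $ j * cnj (\<Sum>i<m. cnj (M $$ (i, j)) * y $ i))"
    by (simp add: sum_distrib_left sum_distrib_right sum.swap[of _ "{..<n}"] ac_simps)
  also have "\<dots> = x \<bullet>c (ctr M *\<^sub>v y)"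
    using M x y by (auto simp: scalar_prod_def mult_mat_vec_def lessThan_atLeast0 intro!: sum.cong)
  finally show ?thesis .
qed

lemma mult_mat_zero_vec[simp]: "dim_col M = n \<Longrightarrow> M *\<^sub>v 0\<^sub>v n = (0\<^sub>v (dim_row M) :: 'a :: semiring_0 vec)"
  by (rule eq_vecI) (auto simp: scalar_prod_def)

lemma mult_assoc_dim:
  "dim_col A = dim_row B \<Longrightarrow> dim_col B = dim_row C \<Longrightarrow> A * B * C = A * (B * (C :: 'a :: semiring_0 mat))"
  by (rule assoc_mult_mat[of A "dim_row A" "dim_col A" B "dim_col B" C "dim_col C"]) auto

lemma add_mult_distrib_dim:
  "dim_row A = dim_row B \<Longrightarrow> dim_col A = dim_col B \<Longrightarrow> dim_col A = dim_row C \<Longrightarrow>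
   (A + B) * C = A * C + B * (C :: 'a :: semiring_0 mat)"
  by (rule add_mult_distrib_mat[of A "dim_row A" "dim_col A" B C "dim_col C"]) auto

lemma mult_add_distrib_dim:
  "dim_row A = dim_row B \<Longrightarrow> dim_col A = dim_col B \<Longrightarrow> dim_col C = dim_row A \<Longrightarrow>
   C * (A + B) = C * A + C * (B :: 'a :: semiring_0 mat)"
  by (rule mult_add_distrib_mat[of C "dim_row C" "dim_col C" A "dim_col A" B]) auto

lemma minus_mult_distrib_dim:
  "dim_row A = dim_row B \<Longrightarrow> dim_col A = dim_col B \<Longrightarrow> dim_col A = dim_row C \<Longrightarrow>
   (A - B) * C = A * C - B * (C :: 'a :: ring mat)"
  by (rule minus_mult_distrib_mat[of A "dim_row A" "dim_col A" B C "dim_col C"]) auto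

lemma mult_minus_distrib_dim:
  "dim_row A = dim_row B \<Longrightarrow> dim_col A = dim_col B \<Longrightarrow> dim_col C = dim_row A \<Longrightarrow>
   C * (A - B) = C * A - C * (B :: 'a :: ring mat)"
  by (rule mult_minus_distrib_mat[of C "dim_row C" "dim_col C" A "dim_col A" B]) auto

text \<open>The side conditions are dimension equations, settled by the simplifier from the dimensions
  of the atoms. Identities are then finished entrywise, since \<open>+\<close> on matrices is commutative
  only between equal dimensions.\<close>

lemmas mat_normalize_simps = mult_assoc_dim add_mult_distrib_dim mult_add_distrib_dim
  minus_mult_distrib_dim mult_minus_distrib_dim
  index_mult_mat(2,3) index_add_mat(2,3) index_minus_mat(2,3) index_uminus_mat(2,3)

lemma mult_inverse_cancel:
  fixes M N Y :: "'a :: semiring_1 mat"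
  assumes "M \<in> carrier_mat n n" "N \<in> carrier_mat n n" "M * N = 1\<^sub>m n" "dim_row Y = n"
  shows "M * (N * Y) = Y"
proof -
  have "M * (N * Y) = M * N * Y" using assms by (intro mult_assoc_dim[symmetric]) auto
  also have "\<dots> = Y" using assms(3,4) left_mult_one_mat[of Y n "dim_col Y"] by auto
  finally show ?thesis .
qed

lemma minus_eq_if_add_eq:
  fixes M N P :: "'a :: ab_group_add mat"
  assumes "M + N = P" "M \<in> carrier_mat r c" "N \<in> carrier_mat r c"
  shows "P - N = M"
  using assms by (auto intro!: eq_matI)

lemma minv_eqI:
  assumes M: "M \<in> carrier_mat m m" and B: "B \<in> carrier_mat m m"
    and MB: "M * B = 1\<^sub>m m" and BM: "B * M = 1\<^sub>m m"
  shows "minv M = B"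
proof -
  have "\<exists>B. B \<in> carrier_mat (dim_row M) (dim_row M) \<and> inverts_mat M B \<and> inverts_mat B M"
    using assms by (auto simp: inverts_mat_def)
  from someI_ex[OF this] have B': "minv M \<in> carrier_mat m m" "minv M * M = 1\<^sub>m m"
    using M unfolding minv_def inverts_mat_def by auto
  have "minv M = minv M * M * B" using B'(1) B M by (simp add: MB)
  also have "\<dots> = B" using B by (simp add: B'(2))
  finally show ?thesis .
qed

lemma minv_invertible:
  assumes M: "M \<in> carrier_mat m m" and inv: "invertible_mat M"
  shows "minv M \<in> carrier_mat m m" "M * minv M = 1\<^sub>m m" "minv M * M = 1\<^sub>m m"
proof -
  from inv obtain B where MB: "M * B = 1\<^sub>m m" and BM: "B * M = 1\<^sub>m (dim_row B)"
    unfolding invertible_mat_def inverts_mat_def using M by auto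
  have B: "B \<in> carrier_mat m m"
    using arg_cong[OF MB, of dim_col] arg_cong[OF BM, of dim_col] M by auto
  show "minv M \<in> carrier_mat m m" "M * minv M = 1\<^sub>m m" "minv M * M = 1\<^sub>m m"
    using minv_eqI[OF M B MB] MB BM B by auto
qed

lemma invertible_mat_if_kernel_trivial:
  fixes M :: "'a :: field mat"
  assumes M: "M \<in> carrier_mat m m"
    and ker: "\<And>x. x \<in> carrier_vec m \<Longrightarrow> M *\<^sub>v x = 0\<^sub>v m \<Longrightarrow> x = 0\<^sub>v m"
  shows "invertible_mat M"
proof -
  have "det M \<noteq> 0" using det_0_iff_vec_prod_zero_field[OF M] ker by auto
  from det_non_zero_imp_unit[OF M this, of "()"] obtain B
    where "B \<in> carrier_mat m m" "B * M = 1\<^sub>m m" "M * B = 1\<^sub>m m"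
    unfolding Units_def ring_mat_def by auto
  then show ?thesis using M unfolding invertible_mat_def inverts_mat_def square_mat.simps by auto
qed

lemma minv_adjoint:
  assumes M: "M \<in> carrier_mat m m" and M_herm: "ctr M = M" and inv: "invertible_mat M"
  shows "ctr (minv M) = minv M"
proof -
  note Mi = minv_invertible[OF M inv]
  have "M * ctr (minv M) = 1\<^sub>m m"
    using mat_adjoint_mult[of "minv M" M] Mi M M_herm by auto
  moreover have "ctr (minv M) * M = 1\<^sub>m m"
    using mat_adjoint_mult[of M "minv M"] Mi M M_herm by auto
  ultimately show ?thesis using minv_eqI[OF M _] Mi(1) by (metis mat_adjoint_carrier)
qed

lemma (in vec_space) full_rank_mult_vec_eq_zero:
  assumes A: "A \<in> carrier_mat n nc" and r: "rank A = nc"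
    and v: "v \<in> carrier_vec nc" and Av: "A *\<^sub>v v = 0\<^sub>v n"
  shows "v = 0\<^sub>v nc"
proof -
  have "distinct (cols A)"
  proof (rule ccontr)
    assume nd: "\<not> distinct (cols A)"
    obtain S where S: "maximal S (\<lambda>T. T \<subseteq> set (cols A) \<and> lin_indpt T)"
      using maximal_exists[of "\<lambda>T. T \<subseteq> set (cols A) \<and> lin_indpt T" "card (set (cols A))" "{}"]
      by (meson List.finite_set card_mono empty_iff empty_subsetI finite_lin_indpt2 rev_finite_subset)
    then have "card S \<le> card (set (cols A))" by (simp add: card_mono maximal_def)
    also have "card (set (cols A)) < nc"
      using nd A card_distinct[of "cols A"] card_length[of "cols A"]
      by (metis cols_length carrier_matD(2) le_neq_implies_less)
    finally show False using rank_card_indpt[OF A S] r by simp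
  qed
  then show ?thesis using lin_depI[OF A v _ Av] full_rank_lin_indpt[OF A r] by blast
qed

lemma gram_mult_vec_eq_zero:
  fixes V :: "complex mat"
  assumes V: "V \<in> carrier_mat n k" and ker: "\<And>x. x \<in> carrier_vec k \<Longrightarrow> V *\<^sub>v x = 0\<^sub>v n \<Longrightarrow> x = 0\<^sub>v k"
    and x: "x \<in> carrier_vec k" and Wx: "(ctr V * V) *\<^sub>v x = 0\<^sub>v k"
  shows "x = 0\<^sub>v k"
proof -
  have Vx: "V *\<^sub>v x \<in> carrier_vec n" using V x by simp
  have "(V *\<^sub>v x) \<bullet>c (V *\<^sub>v x) = (ctr V *\<^sub>v (V *\<^sub>v x)) \<bullet>c x"
    using cscalar_prod_mult_mat_vec[OF mat_adjoint_carrier[OF V] Vx x] by simp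
  also have "\<dots> = 0" using Wx assoc_mult_mat_vec[OF mat_adjoint_carrier[OF V] V x] x by simp
  finally show ?thesis using ker[OF x] Vx by simp
qed

lemma gram_invertible:
  fixes V :: "complex mat"
  assumes V: "V \<in> carrier_mat n k" and rank: "vec_space.rank n V = k"
  shows "invertible_mat (ctr V * V)"
  using gram_mult_vec_eq_zero[OF V vec_space.full_rank_mult_vec_eq_zero[OF V rank]]
  by (rule invertible_mat_if_kernel_trivial[OF mult_carrier_mat[OF mat_adjoint_carrier[OF V] V]])

lemma minus_eq_zero_iff_mat:
  fixes M N :: "'a :: ab_group_add mat"
  assumes "M \<in> carrier_mat r c" "N \<in> carrier_mat r c"
  shows "M - N = 0\<^sub>m r c \<longleftrightarrow> M = N"
  using assms by (auto simp: mat_eq_iff)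

lemma outer_self_eq_zero_iff:
  fixes u :: "complex mat"
  assumes u: "u \<in> carrier_mat k 1"
  shows "u * ctr u = 0\<^sub>m k k \<longleftrightarrow> u = 0\<^sub>m k 1"
proof
  assume uu: "u * ctr u = 0\<^sub>m k k"
  have "u $$ (i, 0) = 0" if i: "i < k" for i
  proof -
    have "u $$ (i, 0) * cnj (u $$ (i, 0)) = (u * ctr u) $$ (i, i)" using u i by (simp add: scalar_prod_def)
    then show ?thesis using uu i by simp
  qed
  then show "u = 0\<^sub>m k 1" using u by (intro eq_matI) auto
qed (use u in auto)

section \<open>Positive semidefinite forms\<close>

lemma psd_mult_vec_eq_zero:
  fixes F :: "complex mat"
  assumes F: "F \<in> carrier_mat n n" and F_herm: "ctr F = F"
    and F_psd: "\<forall>z \<in> carrier_vec n. 0 \<le> Re ((F *\<^sub>v z) \<bullet>c z)"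
    and y: "y \<in> carrier_vec n" and q0: "Re ((F *\<^sub>v y) \<bullet>c y) = 0"
  shows "F *\<^sub>v y = 0\<^sub>v n"
proof -
  define w where "w = F *\<^sub>v y"
  have w: "w \<in> carrier_vec n" and Fw: "F *\<^sub>v w \<in> carrier_vec n" unfolding w_def using F y by auto
  define a where "a = Re (w \<bullet>c w)"
  define b where "b = Re ((F *\<^sub>v w) \<bullet>c w)"
  have b0: "0 \<le> b" unfolding b_def using F_psd w by auto
  have "w \<bullet>c w \<ge> 0" by auto
  then have a0: "0 \<le> a" and ww_real: "Im (w \<bullet>c w) = 0" unfolding a_def by (auto simp: less_eq_complex_def)
  text \<open>The form is \<open>\<ge> 0\<close> along the line \<open>y + t w\<close>, where it equals \<open>2 t |w|\<^sup>2 + t\<^sup>2 w\<^sup>* F w\<close>.\<close>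
  have along: "Re ((F *\<^sub>v (y + of_real t \<cdot>\<^sub>v w)) \<bullet>c (y + of_real t \<cdot>\<^sub>v w)) = 2 * t * a + t\<^sup>2 * b" for t
  proof -
    let ?c = "complex_of_real t"
    have Fz: "F *\<^sub>v (y + ?c \<cdot>\<^sub>v w) = w + ?c \<cdot>\<^sub>v (F *\<^sub>v w)"
      using F y w by (simp add: mult_add_distrib_mat_vec[of _ n n] mult_mat_vec w_def)
    have cz: "conjugate (y + ?c \<cdot>\<^sub>v w) = conjugate y + ?c \<cdot>\<^sub>v conjugate w"
      using y w by (simp add: conjugate_add_vec[of _ n] conjugate_smult_vec)
    have "(F *\<^sub>v w) \<bullet>c y = w \<bullet>c w"
      using cscalar_prod_mult_mat_vec[OF F w y] F_herm w_def by simp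
    then have "(F *\<^sub>v (y + ?c \<cdot>\<^sub>v w)) \<bullet>c (y + ?c \<cdot>\<^sub>v w)
       = w \<bullet>c y + 2 * ?c * (w \<bullet>c w) + ?c * ?c * ((F *\<^sub>v w) \<bullet>c w)"
      unfolding Fz cz using y w Fw
      by (simp add: add_scalar_prod_distrib[of _ n] scalar_prod_add_distrib[of _ n] algebra_simps)
    then show ?thesis using q0 unfolding a_def b_def w_def by (simp add: power2_eq_square)
  qed
  have "a = 0"
  proof (rule ccontr)
    assume "a \<noteq> 0"
    with a0 have a_pos: "a > 0" by simp
    define e where "e = a / (b + 1)"
    have e_pos: "e > 0" unfolding e_def using a_pos b0 by simp
    have "e * (b + 1) = a" unfolding e_def using b0 by simp
    then have "e * (e * b - 2 * a) < 0" using e_pos a_pos by (simp add: algebra_simps mult_pos_neg)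
    moreover have "0 \<le> 2 * (- e) * a + (- e)\<^sup>2 * b"
      using F_psd along[of "- e"] y w by (metis add_carrier_vec smult_carrier_vec)
    ultimately show False by (simp add: algebra_simps power2_eq_square)
  qed
  then have "w \<bullet>c w = 0" using ww_real unfolding a_def by (simp add: complex_eq_iff)
  then show ?thesis using w unfolding w_def by simp
qed

lemma congruence_carrier:
  "F \<in> carrier_mat n n \<Longrightarrow> V \<in> carrier_mat n k \<Longrightarrow> ctr V * F * V \<in> carrier_mat k k"
  by (metis mat_adjoint_carrier mult_carrier_mat)

lemma congruence_psd:
  fixes F V :: "complex mat"
  assumes F: "F \<in> carrier_mat n n" and V: "V \<in> carrier_mat n k"
    and F_psd: "\<forall>z \<in> carrier_vec n. 0 \<le> Re ((F *\<^sub>v z) \<bullet>c z)"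
  shows "\<forall>x \<in> carrier_vec k. 0 \<le> Re ((ctr V * F * V *\<^sub>v x) \<bullet>c x)"
proof
  fix x :: "complex vec" assume x: "x \<in> carrier_vec k"
  have "(ctr V * F * V *\<^sub>v x) \<bullet>c x = (ctr V *\<^sub>v (F *\<^sub>v (V *\<^sub>v x))) \<bullet>c x"
    using assoc_mult_mat_vec[OF mult_carrier_mat[OF mat_adjoint_carrier[OF V] F] V x]
      assoc_mult_mat_vec[OF mat_adjoint_carrier[OF V] F, of "V *\<^sub>v x"] V x by simp
  also have "\<dots> = (F *\<^sub>v (V *\<^sub>v x)) \<bullet>c (V *\<^sub>v x)"
    using cscalar_prod_mult_mat_vec[OF mat_adjoint_carrier[OF V], of "F *\<^sub>v (V *\<^sub>v x)" x] F V x by simp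
  finally show "0 \<le> Re ((ctr V * F * V *\<^sub>v x) \<bullet>c x)" using F_psd V x by simp
qed

lemma congruence_adjoint:
  assumes "F \<in> carrier_mat n n" "V \<in> carrier_mat n k" "ctr F = F"
  shows "ctr (ctr V * F * V) = ctr V * F * V"
  using assms by (simp add: mat_adjoint_mult mult_assoc_dim)

section \<open>Diagonal matrices and the Lyapunov equation\<close>

lemma Lam_carrier[simp]: "Lam k \<alpha> \<in> carrier_mat k k"
  and Lam_dims[simp]: "dim_row (Lam k \<alpha>) = k" "dim_col (Lam k \<alpha>) = k"
  and Lam_index[simp]: "i < k \<Longrightarrow> j < k \<Longrightarrow> Lam k \<alpha> $$ (i, j) = (if i = j then \<alpha> i else 0)"
  unfolding Lam_def by auto

lemma ones_carrier[simp]: "ones k \<in> carrier_mat k 1"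
  and ones_dims[simp]: "dim_row (ones k) = k" "dim_col (ones k) = 1"
  and ones_index[simp]: "i < k \<Longrightarrow> j < 1 \<Longrightarrow> ones k $$ (i, j) = 1"
  unfolding ones_def by auto

lemma mat_adjoint_Lam: "ctr (Lam k \<alpha>) = Lam k (\<lambda>j. cnj (\<alpha> j))"
  by (rule eq_matI) auto

lemma Lam_row_scalar_prod[simp]:
  assumes "i < k" "dim_vec v = k"
  shows "row (Lam k \<alpha>) i \<bullet> v = \<alpha> i * v $ i"
proof -
  have "row (Lam k \<alpha>) i \<bullet> v = (\<Sum>l\<in>{0..<k}. (if i = l then \<alpha> i else 0) * v $ l)"
    using assms by (simp add: scalar_prod_def)
  also have "\<dots> = (\<Sum>l\<in>{0..<k}. if l = i then \<alpha> i * v $ i else 0)"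
    by (rule sum.cong) auto
  finally show ?thesis using assms by simp
qed

lemma scalar_prod_col_Lam[simp]:
  assumes "j < k" "dim_vec v = k"
  shows "v \<bullet> col (Lam k \<alpha>) j = v $ j * \<alpha> j"
proof -
  have "v \<bullet> col (Lam k \<alpha>) j = (\<Sum>l\<in>{0..<k}. v $ l * (if l = j then \<alpha> l else 0))"
    using assms by (simp add: scalar_prod_def)
  also have "\<dots> = (\<Sum>l\<in>{0..<k}. if l = j then v $ j * \<alpha> j else 0)"
    by (rule sum.cong) auto
  finally show ?thesis using assms by simp
qed

lemma Lam_mult_vec: "x \<in> carrier_vec k \<Longrightarrow> Lam k \<alpha> *\<^sub>v x = vec k (\<lambda>i. \<alpha> i * x $ i)"
  by (intro eq_vecI) auto

lemma mat_adjoint_ones_mult_vec: "x \<in> carrier_vec k \<Longrightarrow> (ctr (ones k) *\<^sub>v x) $ 0 = (\<Sum>i<k. x $ i)"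
  by (simp add: mult_mat_vec_def scalar_prod_def lessThan_atLeast0)

lemma mult_adjoint_ones_eq_zero_iff:
  fixes d :: "complex mat"
  assumes d: "d \<in> carrier_mat k 1"
  shows "d * ctr (ones k) = 0\<^sub>m k k \<longleftrightarrow> d = 0\<^sub>m k 1"
proof
  assume d1: "d * ctr (ones k) = 0\<^sub>m k k"
  have "d $$ (i, 0) = 0" if i: "i < k" for i
  proof -
    have "d $$ (i, 0) = (d * ctr (ones k)) $$ (i, 0)" using d i by (simp add: scalar_prod_def)
    then show ?thesis using d1 i by simp
  qed
  then show "d = 0\<^sub>m k 1" using d by (intro eq_matI) auto
qed (use d in auto)

lemma uminus_mat_adjoint_Lam: "- ctr (Lam k \<alpha>) = Lam k (\<lambda>j. - cnj (\<alpha> j))"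
  by (rule eq_matI) auto

lemma char_poly_similar_Lam:
  fixes P Q :: "complex mat"
  assumes P: "P \<in> carrier_mat k k" and Q: "Q \<in> carrier_mat k k" and "P * Q = 1\<^sub>m k" "Q * P = 1\<^sub>m k"
  shows "char_poly (P * Lam k \<beta> * Q) = (\<Prod>j<k. [:- \<beta> j, 1:])"
proof -
  have "similar_mat (P * Lam k \<beta> * Q) (Lam k \<beta>)"
    unfolding similar_mat_def similar_mat_wit_def using assms by (auto simp: Let_def)
  then have "char_poly (P * Lam k \<beta> * Q) = char_poly (Lam k \<beta>)" by (rule char_poly_similar)
  also have "\<dots> = (\<Prod>a \<leftarrow> diag_mat (Lam k \<beta>). [:- a, 1:])"
    by (rule char_poly_upper_triangular[OF Lam_carrier]) (auto simp: upper_triangular_def)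
  also have "diag_mat (Lam k \<beta>) = map \<beta> [0..<k]"
    by (auto simp: diag_mat_def intro: nth_equalityI)
  finally show ?thesis
    by (simp add: prod.distinct_set_conv_list[symmetric] atLeast_upt)
qed

locale lyapunov_equation =
  fixes k :: nat and \<alpha> :: "nat \<Rightarrow> complex" and T G :: "complex mat"
  assumes T: "T \<in> carrier_mat k k" and T_herm: "ctr T = T"
    and G: "G \<in> carrier_mat k k" and G_herm: "ctr G = G"
    and G_psd: "\<forall>z \<in> carrier_vec k. 0 \<le> Re ((G *\<^sub>v z) \<bullet>c z)"
    and lyap: "ctr (Lam k \<alpha>) * T + T * Lam k \<alpha> = G + ones k * ctr (ones k)"
begin

lemma kernel_mult_Lam:
  assumes x: "x \<in> carrier_vec k" and Tx: "T *\<^sub>v x = 0\<^sub>v k"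
  shows "T *\<^sub>v (Lam k \<alpha> *\<^sub>v x) = G *\<^sub>v x + ones k *\<^sub>v (ctr (ones k) *\<^sub>v x)"
proof -
  let ?L = "Lam k \<alpha>" and ?o = "ones k"
  have L: "?L \<in> carrier_mat k k" and Lh: "ctr ?L \<in> carrier_mat k k"
    and o: "?o \<in> carrier_mat k 1" and oh: "ctr ?o \<in> carrier_mat 1 k" by auto
  have "T *\<^sub>v (?L *\<^sub>v x) = ctr ?L *\<^sub>v (T *\<^sub>v x) + T *\<^sub>v (?L *\<^sub>v x)"
    using T mult_mat_vec_carrier[OF L x] by (simp add: Tx)
  also have "\<dots> = (ctr ?L * T + T * ?L) *\<^sub>v x"
    using add_mult_distrib_mat_vec[OF mult_carrier_mat[OF Lh T] mult_carrier_mat[OF T L] x]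
      assoc_mult_mat_vec[OF Lh T x] assoc_mult_mat_vec[OF T L x] by simp
  also have "\<dots> = G *\<^sub>v x + ?o *\<^sub>v (ctr ?o *\<^sub>v x)"
    unfolding lyap using add_mult_distrib_mat_vec[OF G mult_carrier_mat[OF o oh] x]
      assoc_mult_mat_vec[OF o oh x] by simp
  finally show ?thesis .
qed

lemma kernel_invariant:
  assumes x: "x \<in> carrier_vec k" and Tx: "T *\<^sub>v x = 0\<^sub>v k"
  shows "ctr (ones k) *\<^sub>v x = 0\<^sub>v 1" "T *\<^sub>v (Lam k \<alpha> *\<^sub>v x) = 0\<^sub>v k"
proof -
  define s where "s = ctr (ones k) *\<^sub>v x"
  have s: "s \<in> carrier_vec 1"
    unfolding s_def by (rule mult_mat_vec_carrier[OF mat_adjoint_carrier[OF ones_carrier] x])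
  have Lx: "Lam k \<alpha> *\<^sub>v x \<in> carrier_vec k" by (rule mult_mat_vec_carrier[OF Lam_carrier x])
  note TLx = kernel_mult_Lam[OF x Tx, folded s_def]
  have "(G *\<^sub>v x) \<bullet>c x + s \<bullet>c s = (T *\<^sub>v (Lam k \<alpha> *\<^sub>v x)) \<bullet>c x"
    unfolding TLx using cscalar_prod_mult_mat_vec[OF ones_carrier s x]
    by (subst add_scalar_prod_distrib[of _ k]) (use G x mult_mat_vec_carrier[OF ones_carrier s] s_def in auto)
  also have "\<dots> = 0"
    using cscalar_prod_mult_mat_vec[OF T Lx x] T_herm Tx Lx by simp
  finally have sum0: "(G *\<^sub>v x) \<bullet>c x + s \<bullet>c s = 0" .
  have "s \<bullet>c s \<ge> 0" by auto
  then have "0 \<le> Re (s \<bullet>c s)" "Im (s \<bullet>c s) = 0" by (auto simp: less_eq_complex_def)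
  moreover have "0 \<le> Re ((G *\<^sub>v x) \<bullet>c x)" using G_psd x by auto
  moreover have "Re ((G *\<^sub>v x) \<bullet>c x) + Re (s \<bullet>c s) = 0" using arg_cong[OF sum0, of Re] by simp
  ultimately have "Re ((G *\<^sub>v x) \<bullet>c x) = 0" "s \<bullet>c s = 0" by (auto simp: complex_eq_iff)
  then have "G *\<^sub>v x = 0\<^sub>v k" "s = 0\<^sub>v 1"
    using psd_mult_vec_eq_zero[OF G G_herm G_psd x] s by auto
  then show "ctr (ones k) *\<^sub>v x = 0\<^sub>v 1" "T *\<^sub>v (Lam k \<alpha> *\<^sub>v x) = 0\<^sub>v k"
    unfolding TLx s_def by auto
qed

lemma kernel_supported_at:
  assumes x: "x \<in> carrier_vec k" and Tx: "T *\<^sub>v x = 0\<^sub>v k" and j: "j < k"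
    and off_j: "\<And>i. i < k \<Longrightarrow> i \<noteq> j \<Longrightarrow> x $ i = 0"
  shows "x = 0\<^sub>v k"
proof -
  have "(ctr (ones k) *\<^sub>v x) $ 0 = x $ j"
    unfolding mat_adjoint_ones_mult_vec[OF x] using j off_j
    by (subst sum.remove[of _ j]) (auto intro!: sum.neutral)
  then have "x $ j = 0" using kernel_invariant(1)[OF x Tx] by simp
  then show ?thesis using off_j x by (intro eq_vecI) auto
qed

lemma kernel_trivial:
  assumes \<alpha>_dist: "\<forall>i<k. \<forall>j<k. i \<noteq> j \<longrightarrow> \<alpha> i \<noteq> \<alpha> j"
    and x: "x \<in> carrier_vec k" and Tx: "T *\<^sub>v x = 0\<^sub>v k"
  shows "x = 0\<^sub>v k"
proof -
  have "\<forall>x \<in> carrier_vec k. T *\<^sub>v x = 0\<^sub>v k \<longrightarrow> (\<forall>i<k. i \<notin> S \<longrightarrow> x $ i = 0) \<longrightarrow> x = 0\<^sub>v k"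
    if "finite S" for S
    using that
  proof (induction S rule: finite_induct)
    case empty
    then show ?case by (auto intro!: eq_vecI)
  next
    case (insert j S)
    show ?case
    proof (intro ballI impI)
      fix x :: "complex vec" assume x: "x \<in> carrier_vec k" and Tx: "T *\<^sub>v x = 0\<^sub>v k"
        and supp: "\<forall>i<k. i \<notin> insert j S \<longrightarrow> x $ i = 0"
      show "x = 0\<^sub>v k"
      proof (cases "j < k")
        case False
        then show ?thesis using insert.IH x Tx supp by auto
      next
        case True
        text \<open>\<open>\<Lambda> x - \<alpha>\<^sub>j x\<close> lies in the kernel and vanishes at \<open>j\<close>, hence is zero.\<close>
        define z where "z = Lam k \<alpha> *\<^sub>v x - \<alpha> j \<cdot>\<^sub>v x"
        have z: "z \<in> carrier_vec k" unfolding z_def using x by (simp add: Lam_mult_vec)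
        have z_index: "i < k \<Longrightarrow> z $ i = (\<alpha> i - \<alpha> j) * x $ i" for i
          unfolding z_def using x by (simp add: Lam_mult_vec algebra_simps)
        have "T *\<^sub>v z = T *\<^sub>v (Lam k \<alpha> *\<^sub>v x) - \<alpha> j \<cdot>\<^sub>v (T *\<^sub>v x)"
          unfolding z_def
          using mult_minus_distrib_mat_vec[OF T mult_mat_vec_carrier[OF Lam_carrier x]
              smult_carrier_vec[THEN iffD2, OF x]] mult_mat_vec[OF T x] by simp
        then have "T *\<^sub>v z = 0\<^sub>v k" using kernel_invariant(2)[OF x Tx] Tx by auto
        moreover have "\<forall>i<k. i \<notin> S \<longrightarrow> z $ i = 0" using supp z_index by auto
        ultimately have "z = 0\<^sub>v k" using insert.IH z by auto
        then have "i < k \<Longrightarrow> i \<noteq> j \<Longrightarrow> x $ i = 0" for i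
          using z_index[of i] \<alpha>_dist True by auto
        then show ?thesis using kernel_supported_at[OF x Tx True] by blast
      qed
    qed
  qed
  from this[of "{..<k}"] show ?thesis using x Tx by auto
qed

end

lemma Vk_carrier[simp]: "Vk n k A C \<alpha> \<in> carrier_mat n k"
  and Vk_dims[simp]: "dim_row (Vk n k A C \<alpha>) = n" "dim_col (Vk n k A C \<alpha>) = k"
  unfolding Vk_def by auto

lemma Tk_carrier[simp]: "Tk n k A C F \<alpha> \<in> carrier_mat k k"
  and Tk_dims[simp]: "dim_row (Tk n k A C F \<alpha>) = k" "dim_col (Tk n k A C F \<alpha>) = k"
  unfolding Tk_def Let_def by auto

lemma Tk_index:
  "i < k \<Longrightarrow> j < k \<Longrightarrow> Tk n k A C F \<alpha> $$ (i, j) =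
     (1 + (ctr (Vk n k A C \<alpha>) * F * Vk n k A C \<alpha>) $$ (i, j)) / (cnj (\<alpha> i) + \<alpha> j)"
  unfolding Tk_def Let_def by simp

lemma mult_resolvent:
  fixes M Z :: "complex mat"
  assumes M: "M \<in> carrier_mat n n" and Z: "Z \<in> carrier_mat n m"
    and inv: "invertible_mat (- M + a \<cdot>\<^sub>m 1\<^sub>m n)"
  defines "Y \<equiv> minv (- M + a \<cdot>\<^sub>m 1\<^sub>m n) * Z"
  shows "M * Y = a \<cdot>\<^sub>m Y - Z"
proof -
  let ?B = "- M + a \<cdot>\<^sub>m 1\<^sub>m n"
  have B: "?B \<in> carrier_mat n n" using M by auto
  note Bi = minv_invertible[OF B inv]
  have Y: "Y \<in> carrier_mat n m" unfolding Y_def using Bi(1) Z by simp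
  have "Z = ?B * minv ?B * Z" using Bi(2) Z by simp
  also have "\<dots> = ?B * Y" unfolding Y_def by (rule assoc_mult_mat[OF B Bi(1) Z])
  also have "\<dots> = - (M * Y) + a \<cdot>\<^sub>m Y"
    using M Y by (simp add: add_mult_distrib_mat[of _ n n] mult_smult_assoc_mat[of _ n n])
  finally have "Z = - (M * Y) + a \<cdot>\<^sub>m Y" .
  then show ?thesis using M Y Z by (auto simp: mat_eq_iff)
qed

lemma Vk_shift:
  assumes A: "A \<in> carrier_mat n n" and C: "C \<in> carrier_mat 1 n"
    and \<alpha>_nonsing: "\<forall>j<k. invertible_mat (- ctr A + \<alpha> j \<cdot>\<^sub>m 1\<^sub>m n)"
  shows "ctr A * Vk n k A C \<alpha> = Vk n k A C \<alpha> * Lam k \<alpha> - ctr C * ctr (ones k)"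
proof (rule eq_matI)
  let ?V = "Vk n k A C \<alpha>"
  fix i j assume "i < dim_row (?V * Lam k \<alpha> - ctr C * ctr (ones k))"
    "j < dim_col (?V * Lam k \<alpha> - ctr C * ctr (ones k))"
  then have i: "i < n" and j: "j < k" using C by auto
  define Y where "Y = minv (- ctr A + \<alpha> j \<cdot>\<^sub>m 1\<^sub>m n) * ctr C"
  have AY: "ctr A * Y = \<alpha> j \<cdot>\<^sub>m Y - ctr C"
    unfolding Y_def using A C \<alpha>_nonsing j by (intro mult_resolvent) auto
  have Y: "Y \<in> carrier_mat n 1"
    unfolding Y_def using minv_invertible(1)[of "- ctr A + \<alpha> j \<cdot>\<^sub>m 1\<^sub>m n" n] A C \<alpha>_nonsing j
    by (intro mult_carrier_mat[of _ n n]) auto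
  have V_entry: "l < n \<Longrightarrow> ?V $$ (l, j) = Y $$ (l, 0)" for l using j by (simp add: Vk_def Y_def)
  have "(ctr A * ?V) $$ (i, j) = (ctr A * Y) $$ (i, 0)"
    using i j A Y by (auto simp: scalar_prod_def V_entry intro!: sum.cong)
  also have "\<dots> = \<alpha> j * Y $$ (i, 0) - ctr C $$ (i, 0)" unfolding AY using i Y C by simp
  also have "\<dots> = (?V * Lam k \<alpha> - ctr C * ctr (ones k)) $$ (i, j)"
    using i j C by (simp add: V_entry, simp add: scalar_prod_def)
  finally show "(ctr A * ?V) $$ (i, j) = (?V * Lam k \<alpha> - ctr C * ctr (ones k)) $$ (i, j)" .
qed (use A C in auto)

lemma Tk_lyapunov:
  assumes \<alpha>_pos: "\<forall>j<k. 0 < Re (\<alpha> j)"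
  shows "ctr (Lam k \<alpha>) * Tk n k A C F \<alpha> + Tk n k A C F \<alpha> * Lam k \<alpha>
     = ctr (Vk n k A C \<alpha>) * F * Vk n k A C \<alpha> + ones k * ctr (ones k)"
proof (rule eq_matI)
  let ?T = "Tk n k A C F \<alpha>" and ?G = "ctr (Vk n k A C \<alpha>) * F * Vk n k A C \<alpha>"
  fix i j assume "i < dim_row (?G + ones k * ctr (ones k))" "j < dim_col (?G + ones k * ctr (ones k))"
  then have i: "i < k" and j: "j < k" by auto
  have "Re (cnj (\<alpha> i) + \<alpha> j) > 0" using \<alpha>_pos i j by (simp add: add_pos_pos)
  then have nz: "cnj (\<alpha> i) + \<alpha> j \<noteq> 0" by (metis zero_complex.sel(1) less_irrefl)
  have "(ctr (Lam k \<alpha>) * ?T + ?T * Lam k \<alpha>) $$ (i, j) = (cnj (\<alpha> i) + \<alpha> j) * ?T $$ (i, j)"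
    using i j by (simp add: mat_adjoint_Lam algebra_simps)
  also have "\<dots> = 1 + ?G $$ (i, j)" using i j nz by (simp add: Tk_index)
  also have "\<dots> = (?G + ones k * ctr (ones k)) $$ (i, j)" using i j by (simp add: scalar_prod_def)
  finally show "(ctr (Lam k \<alpha>) * ?T + ?T * Lam k \<alpha>) $$ (i, j) = (?G + ones k * ctr (ones k)) $$ (i, j)" .
qed auto

lemma Tk_adjoint:
  assumes F: "F \<in> carrier_mat n n" and F_herm: "ctr F = F"
  shows "ctr (Tk n k A C F \<alpha>) = Tk n k A C F \<alpha>"
proof (rule eq_matI)
  let ?G = "ctr (Vk n k A C \<alpha>) * F * Vk n k A C \<alpha>"
  have G_herm: "ctr ?G = ?G" using congruence_adjoint[OF F Vk_carrier F_herm] .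
  fix i j assume "i < dim_row (Tk n k A C F \<alpha>)" "j < dim_col (Tk n k A C F \<alpha>)"
  then have i: "i < k" and j: "j < k" by auto
  have "cnj (?G $$ (j, i)) = ?G $$ (i, j)"
    using arg_cong[OF G_herm, of "\<lambda>M. M $$ (i, j)"] i j F by simp
  then show "ctr (Tk n k A C F \<alpha>) $$ (i, j) = Tk n k A C F \<alpha> $$ (i, j)"
    using i j by (simp add: Tk_index add.commute)
qed auto

lemma Tk_invertible:
  assumes F: "F \<in> carrier_mat n n" and F_herm: "ctr F = F"
    and F_psd: "\<forall>x \<in> carrier_vec n. 0 \<le> Re ((F *\<^sub>v x) \<bullet>c x)"
    and \<alpha>_dist: "\<forall>i<k. \<forall>j<k. i \<noteq> j \<longrightarrow> \<alpha> i \<noteq> \<alpha> j" and \<alpha>_pos: "\<forall>j<k. 0 < Re (\<alpha> j)"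
  shows "invertible_mat (Tk n k A C F \<alpha>)"
proof -
  interpret lyapunov_equation k \<alpha> "Tk n k A C F \<alpha>" "ctr (Vk n k A C \<alpha>) * F * Vk n k A C \<alpha>"
    using Tk_adjoint[OF F F_herm] Tk_lyapunov[OF \<alpha>_pos] congruence_carrier[OF F Vk_carrier]
      congruence_adjoint[OF F Vk_carrier F_herm] congruence_psd[OF F Vk_carrier F_psd]
    by unfold_locales auto
  show ?thesis using kernel_trivial[OF \<alpha>_dist] by (rule invertible_mat_if_kernel_trivial[OF Tk_carrier])
qed

section \<open>Projection of the Riccati equation\<close>

text \<open>\<open>L\<close>, \<open>Ti\<close> and \<open>Wi\<close> play the roles of \<open>\<Lambda>\<^sub>k\<close>, \<open>T\<^sub>k\<^sup>-\<^sup>1\<close> and \<open>(V\<^sub>k\<^sup>* V\<^sub>k)\<^sup>-\<^sup>1\<close>; \<open>L\<close> need not be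
  diagonal.\<close>

locale riccati_projection =
  fixes n k :: nat and V A C F L T Ti Wi :: "complex mat"
  assumes V: "V \<in> carrier_mat n k" and A: "A \<in> carrier_mat n n" and C: "C \<in> carrier_mat 1 n"
    and F: "F \<in> carrier_mat n n" and L: "L \<in> carrier_mat k k" and T: "T \<in> carrier_mat k k"
    and Ti: "Ti \<in> carrier_mat k k" and T_Ti: "T * Ti = 1\<^sub>m k" and Ti_T: "Ti * T = 1\<^sub>m k"
    and Ti_adjoint: "ctr Ti = Ti"
    and Wi: "Wi \<in> carrier_mat k k" and gram_Wi: "ctr V * V * Wi = 1\<^sub>m k"
    and Wi_gram: "Wi * (ctr V * V) = 1\<^sub>m k"
    and shift: "ctr A * V = V * L - ctr C * ctr (ones k)"
    and lyapunov: "ctr L * T + T * L = ctr V * F * V + ones k * ctr (ones k)"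
begin

lemmas dims = carrier_matD[OF V] carrier_matD[OF A] carrier_matD[OF C] carrier_matD[OF F]
  carrier_matD[OF L] carrier_matD[OF T] carrier_matD[OF Ti] carrier_matD[OF Wi]

lemma gram_adjoint: "ctr (ctr V * V) = ctr V * V"
  by (simp add: mat_adjoint_mult dims)

lemma projected_shift: "ctr V * ctr A * V = ctr V * V * L - ctr V * ctr C * ctr (ones k)"
proof -
  have "ctr V * ctr A * V = ctr V * (ctr A * V)" by (simp add: mult_assoc_dim dims)
  then show ?thesis unfolding shift by (simp add: mat_normalize_simps dims)
qed

lemma projected_lyapunov: "ctr V * F * V = ctr L * T + T * L - ones k * ctr (ones k)"
  using minus_eq_if_add_eq[OF lyapunov[symmetric] congruence_carrier[OF F V]
      mult_carrier_mat[OF ones_carrier mat_adjoint_carrier[OF ones_carrier]]] ..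

lemma projected_residual:
  defines "X \<equiv> V * Ti * ctr V" and "u \<equiv> ctr V * ctr C - ctr V * V * (Ti * ones k)"
  shows "ctr V * (ctr C * C + ctr A * X + X * A - X * F * X) * V = u * ctr u"
proof -
  define W where "W = ctr V * V"
  define c where "c = ctr V * ctr C"
  have Wc_dims: "dim_row W = k" "dim_col W = k" "dim_row c = k" "dim_col c = 1"
    unfolding W_def c_def by (simp_all add: dims)
  have VAV: "ctr V * ctr A * V = W * L - c * ctr (ones k)"
    unfolding W_def c_def by (rule projected_shift)
  have VAV': "ctr V * A * V = ctr L * W - ones k * ctr c"
  proof -
    have "ctr V * A * V = ctr (ctr V * ctr A * V)" by (simp add: mat_adjoint_mult dims mult_assoc_dim)
    also have "\<dots> = ctr L * W - ones k * ctr c"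
      unfolding VAV by (simp add: mat_adjoint_minus mat_adjoint_mult W_def gram_adjoint dims Wc_dims)
    finally show ?thesis .
  qed
  have "ctr V * (ctr C * C + ctr A * X + X * A - X * F * X) * V
      = c * ctr c + (ctr V * ctr A * V) * Ti * W + W * Ti * (ctr V * A * V)
        - W * Ti * (ctr V * F * V) * Ti * W"
    unfolding X_def W_def c_def by (simp add: mat_normalize_simps dims mat_adjoint_mult)
  also have "\<dots> = u * ctr u"
    unfolding VAV VAV' projected_lyapunov u_def W_def[symmetric] c_def[symmetric]
    by (simp add: mat_normalize_simps dims Wc_dims mat_adjoint_minus mat_adjoint_mult
        Ti_adjoint gram_adjoint[folded W_def] mult_inverse_cancel[OF T Ti T_Ti] mult_inverse_cancel[OF Ti T Ti_T])
      (intro eq_matI; simp add: dims Wc_dims del: index_mult_mat(1))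
  finally show ?thesis .
qed

lemma gram: "ctr V * V \<in> carrier_mat k k"
  using mult_carrier_mat[OF mat_adjoint_carrier[OF V] V] .

lemma Wi_gram_cancel:
  assumes "dim_row Y = k"
  shows "Wi * (ctr V * (V * Y)) = Y"
proof -
  have "Wi * (ctr V * (V * Y)) = Wi * (ctr V * V * Y)" using assms by (simp add: mult_assoc_dim dims)
  also have "\<dots> = Y" by (rule mult_inverse_cancel[OF Wi gram Wi_gram assms])
  finally show ?thesis .
qed

lemma gram_Wi_cancel:
  assumes "dim_row Y = k"
  shows "ctr V * (V * (Wi * Y)) = Y"
proof -
  have "ctr V * (V * (Wi * Y)) = ctr V * V * (Wi * Y)" using assms by (simp add: mult_assoc_dim dims)
  also have "\<dots> = Y" by (rule mult_inverse_cancel[OF gram Wi gram_Wi assms])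
  finally show ?thesis .
qed

lemma projected_residual_eq_zero_iff:
  defines "X \<equiv> V * Ti * ctr V"
  shows "ctr V * (ctr C * C + ctr A * X + X * A - X * F * X) * V = 0\<^sub>m k k
     \<longleftrightarrow> Wi * ctr V * ctr C = Ti * ones k"
proof -
  define g where "g = Wi * ctr V * ctr C"
  define u where "u = ctr V * ctr C - ctr V * V * (Ti * ones k)"
  have u: "u \<in> carrier_mat k 1" and g: "g \<in> carrier_mat k 1" and Tio: "Ti * ones k \<in> carrier_mat k 1"
    unfolding u_def g_def by (auto intro!: carrier_matI simp: dims)
  have "u = ctr V * V * (g - Ti * ones k)" and "g - Ti * ones k = Wi * u"
    unfolding u_def g_def by (simp_all add: mat_normalize_simps dims Wi_gram_cancel gram_Wi_cancel)
  then have "u = 0\<^sub>m k 1 \<longleftrightarrow> g - Ti * ones k = 0\<^sub>m k 1" using V Wi by (metis gram right_mult_zero_mat)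
  then show ?thesis
    unfolding X_def projected_residual outer_self_eq_zero_iff[OF u[unfolded u_def]]
    using minus_eq_zero_iff_mat[OF g Tio] by (simp add: u_def g_def)
qed

lemma lyapunov_defect:
  "ctr L * T + T * (Wi * ctr V * ctr A * V) - ctr V * F * V
     = (ones k - T * (Wi * ctr V * ctr C)) * ctr (ones k)"
proof -
  have "Wi * ctr V * ctr A * V = Wi * (ctr V * ctr A * V)" by (simp add: mult_assoc_dim dims)
  also have "\<dots> = L - Wi * ctr V * ctr C * ctr (ones k)"
    unfolding projected_shift by (simp add: mat_normalize_simps dims Wi_gram_cancel gram_Wi_cancel)
  finally show ?thesis
    unfolding projected_lyapunov
    by (simp add: mat_normalize_simps dims) (intro eq_matI; simp add: dims del: index_mult_mat(1))
qed

lemma lyapunov_defect_eq_zero_iff: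
  "ctr L * T + T * (Wi * ctr V * ctr A * V) - ctr V * F * V = 0\<^sub>m k k
     \<longleftrightarrow> Wi * ctr V * ctr C = Ti * ones k"
proof -
  define g where "g = Wi * ctr V * ctr C"
  have g: "g \<in> carrier_mat k 1" and Tio: "Ti * ones k \<in> carrier_mat k 1"
    and d: "ones k - T * g \<in> carrier_mat k 1"
    unfolding g_def by (auto intro!: carrier_matI simp: dims)
  have "ones k - T * g = T * (Ti * ones k - g)" and "Ti * ones k - g = Ti * (ones k - T * g)"
    by (simp_all add: mat_normalize_simps dims g_def mult_inverse_cancel[OF T Ti T_Ti]
        mult_inverse_cancel[OF Ti T Ti_T])
  then have "ones k - T * g = 0\<^sub>m k 1 \<longleftrightarrow> Ti * ones k - g = 0\<^sub>m k 1"
    using T Ti by (metis right_mult_zero_mat)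
  then show ?thesis
    unfolding lyapunov_defect mult_adjoint_ones_eq_zero_iff[OF d[unfolded g_def]]
    using minus_eq_zero_iff_mat[OF Tio g] by (auto simp: g_def)
qed

lemma projected_closed_loop:
  "Wi * ctr V * (ctr A - V * Ti * ctr V * F) * V
     = Ti * (ctr L * T + T * (Wi * ctr V * ctr A * V) - ctr V * F * V) - Ti * ctr L * T"
  by (simp add: mat_normalize_simps dims Wi_gram_cancel mult_inverse_cancel[OF Ti T Ti_T])
    (intro eq_matI; simp add: dims del: index_mult_mat(1))

lemma projected_closed_loop_similar:
  assumes "ctr L * T + T * (Wi * ctr V * ctr A * V) - ctr V * F * V = 0\<^sub>m k k"
  shows "Wi * ctr V * (ctr A - V * Ti * ctr V * F) * V = Ti * (- ctr L) * T"
  unfolding projected_closed_loop assms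
  by (simp add: mat_normalize_simps dims) (intro eq_matI; simp add: dims del: index_mult_mat(1))

end

theorem theorem6p4:
  fixes n k :: nat and A C F :: "complex mat" and \<alpha> :: "nat \<Rightarrow> complex"
  assumes A: "A \<in> carrier_mat n n" and C: "C \<in> carrier_mat 1 n" and F: "F \<in> carrier_mat n n"
    and F_herm: "ctr F = F"
    and \<alpha>_dist: "\<forall>i<k. \<forall>j<k. i \<noteq> j \<longrightarrow> \<alpha> i \<noteq> \<alpha> j"
    and \<alpha>_pos: "\<forall>j<k. 0 < Re (\<alpha> j)"
    and \<alpha>_nonsing: "\<forall>j<k. invertible_mat (- ctr A + \<alpha> j \<cdot>\<^sub>m 1\<^sub>m n)"
    and A_passive: "\<forall>x \<in> carrier_vec n. x \<noteq> 0\<^sub>v n \<longrightarrow> Re ((A *\<^sub>v x) \<bullet>c x) < 0"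
    and F_psd: "\<forall>x \<in> carrier_vec n. 0 \<le> Re ((F *\<^sub>v x) \<bullet>c x)"
    and full_rank: "vec_space.rank n (Vk n k A C \<alpha>) = k"
  defines "V \<equiv> Vk n k A C \<alpha>"
    and "T \<equiv> Tk n k A C F \<alpha>"
    and "\<Lambda> \<equiv> Lam k \<alpha>"
  defines "X \<equiv> V * minv T * ctr V"
  defines "R \<equiv> ctr C * C + ctr A * X + X * A - X * F * X"
  defines "K \<equiv> minv (ctr V * V) * ctr V * ctr A * V"
    and "g \<equiv> minv (ctr V * V) * ctr V * ctr C"
  shows "(ctr V * R * V = 0\<^sub>m k k \<longleftrightarrow> g = minv T * ones k)
       \<and> (ctr V * R * V = 0\<^sub>m k k \<longleftrightarrow> ctr \<Lambda> * T + T * K - ctr V * F * V = 0\<^sub>m k k)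
       \<and> (ctr V * R * V = 0\<^sub>m k k \<longrightarrow>
            char_poly (minv (ctr V * V) * ctr V * (ctr A - V * minv T * ctr V * F) * V)
              = (\<Prod>j<k. [: - (- cnj (\<alpha> j)), 1 :]))"
proof -
  have V: "V \<in> carrier_mat n k" and T: "T \<in> carrier_mat k k" unfolding V_def T_def by simp_all
  have shift: "ctr A * V = V * \<Lambda> - ctr C * ctr (ones k)"
    unfolding V_def \<Lambda>_def by (rule Vk_shift[OF A C \<alpha>_nonsing])
  have lyap: "ctr \<Lambda> * T + T * \<Lambda> = ctr V * F * V + ones k * ctr (ones k)"
    unfolding V_def T_def \<Lambda>_def by (rule Tk_lyapunov[OF \<alpha>_pos])
  have T_herm: "ctr T = T" unfolding T_def by (rule Tk_adjoint[OF F F_herm])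
  have T_inv: "invertible_mat T" unfolding T_def by (rule Tk_invertible[OF F F_herm F_psd \<alpha>_dist \<alpha>_pos])
  have W: "ctr V * V \<in> carrier_mat k k" using mult_carrier_mat[OF mat_adjoint_carrier[OF V] V] .
  have W_inv: "invertible_mat (ctr V * V)" using gram_invertible[OF V full_rank[folded V_def]] .
  interpret riccati_projection n k V A C F \<Lambda> T "minv T" "minv (ctr V * V)"
    using minv_invertible[OF T T_inv] minv_invertible[OF W W_inv] minv_adjoint[OF T T_herm T_inv]
      A C F V T shift lyap by unfold_locales (auto simp: \<Lambda>_def)
  have I: "ctr V * R * V = 0\<^sub>m k k \<longleftrightarrow> g = minv T * ones k"
    unfolding R_def X_def g_def by (rule projected_residual_eq_zero_iff)
  have II: "ctr \<Lambda> * T + T * K - ctr V * F * V = 0\<^sub>m k k \<longleftrightarrow> g = minv T * ones k"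
    unfolding K_def g_def by (rule lyapunov_defect_eq_zero_iff)
  have III: "char_poly (minv (ctr V * V) * ctr V * (ctr A - V * minv T * ctr V * F) * V)
      = (\<Prod>j<k. [: - (- cnj (\<alpha> j)), 1 :])" if "ctr \<Lambda> * T + T * K - ctr V * F * V = 0\<^sub>m k k"
  proof -
    have "minv (ctr V * V) * ctr V * (ctr A - V * minv T * ctr V * F) * V = minv T * (- ctr \<Lambda>) * T"
      using that unfolding K_def by (rule projected_closed_loop_similar)
    then show ?thesis
      unfolding \<Lambda>_def uminus_mat_adjoint_Lam using char_poly_similar_Lam[OF Ti T Ti_T T_Ti] by simp
  qed
  show ?thesis using I II III by blast
qed

end
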